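(* Let $F'\in\mathcal I$ and suppose $\sum_{u\in F'}f(u)+\sum_{v\in P}w'(v)d(v,F')^p\le z'$. Then $\sum_{u\in F'}f(u)+\sum_{v\in P}w(v)d(v,F')^p\le 4\cdot16^{p-1}z^*+\left(\tfrac87\right)^{p-1}z'$, where $z^*$ is the optimal value of $\textsc{FacilityMatLP}(w,\mathcal M)$.
   Context: Setting: $p\ge1$; a finite metric $d$ on $P\cup\mathcal F$; $f:\mathcal F\to\mathbb{R}_{\ge0}$; $w:P\to\mathbb{R}_{\ge0}$; matroid $\mathcal M=(\mathcal F,\mathcal I)$ with rank $r$. $\textsc{FacilityMatLP}(w,\mathcal M)$: minimize $\sum_u f(u)y_u+\sum_{v,u}w(v)d(v,u)^px_{vu}$ s.t. $\sum_u x_{vu}\ge1$, $\sum_{u\in S}y_u\le r(S)$ for all $S\subseteq\mathcal F$, $0\le x_{vu}\le y_u$. Let $(x,y)$ be an optimal solution (value $z^*$) with $\sum_u x_{vu}=1$ for all $v$, and $\mathcal R(v):=(\sum_u d(v,u)^px_{vu})^{1/p}$. $w'$ is obtained by client consolidation: order clients so that $\mathcal R(v_1)\le\dots\le\mathcal R(v_n)$; set $w':=w$; for $i=1,\dots,n-1$ and $j=i+1,\dots,n$: if $d(v_i,v_j)\le2^{(p+1)/p}\mathcal R(v_j)$ and $w'(v_i)>0$, set $w'(v_i)\leftarrow w'(v_i)+w'(v_j)$, $w'(v_j)\leftarrow0$. *)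

theory Defs
  imports Complex_Main
begin

definition matroid :: "'a set \<Rightarrow> 'a set set \<Rightarrow> bool" where
  "matroid E I \<longleftrightarrow> finite E \<and> (\<forall>A\<in>I. A \<subseteq> E) \<and> {} \<in> I \<and>
     (\<forall>A B. B \<in> I \<longrightarrow> A \<subseteq> B \<longrightarrow> A \<in> I) \<and>
     (\<forall>A B. A \<in> I \<longrightarrow> B \<in> I \<longrightarrow> card A < card B \<longrightarrow> (\<exists>x\<in>B - A. insert x A \<in> I))"

definition mrank :: "'a set set \<Rightarrow> 'a set \<Rightarrow> nat" where
  "mrank I S = Max {card A | A. A \<in> I \<and> A \<subseteq> S}"

definition metric_on :: "'a set \<Rightarrow> ('a \<Rightarrow> 'a \<Rightarrow> real) \<Rightarrow> bool" where
  "metric_on X d \<longleftrightarrow> (\<forall>a\<in>X. \<forall>b\<in>X. 0 \<le> d a b \<and> (d a b = 0 \<longleftrightarrow> a = b) \<and> d a b = d b a) \<and>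
     (\<forall>a\<in>X. \<forall>b\<in>X. \<forall>c\<in>X. d a c \<le> d a b + d b c)"

definition dist_set :: "('a \<Rightarrow> 'a \<Rightarrow> real) \<Rightarrow> 'a \<Rightarrow> 'a set \<Rightarrow> real" where
  "dist_set d v S = Min ((\<lambda>u. d v u) ` S)"

definition lp_feasible ::
  "'a set \<Rightarrow> 'a set \<Rightarrow> 'a set set \<Rightarrow> ('a \<Rightarrow> 'a \<Rightarrow> real) \<Rightarrow> ('a \<Rightarrow> real) \<Rightarrow> bool" where
  "lp_feasible P F I x y \<longleftrightarrow>
     (\<forall>v\<in>P. (\<Sum>u\<in>F. x v u) \<ge> 1) \<and>
     (\<forall>S. S \<subseteq> F \<longrightarrow> (\<Sum>u\<in>S. y u) \<le> real (mrank I S)) \<and>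
     (\<forall>v\<in>P. \<forall>u\<in>F. 0 \<le> x v u \<and> x v u \<le> y u)"

definition lp_obj ::
  "real \<Rightarrow> ('a \<Rightarrow> 'a \<Rightarrow> real) \<Rightarrow> ('a \<Rightarrow> real) \<Rightarrow> ('a \<Rightarrow> real) \<Rightarrow> 'a set \<Rightarrow> 'a set
     \<Rightarrow> ('a \<Rightarrow> 'a \<Rightarrow> real) \<Rightarrow> ('a \<Rightarrow> real) \<Rightarrow> real" where
  "lp_obj p d f w P F x y =
     (\<Sum>u\<in>F. f u * y u) + (\<Sum>v\<in>P. \<Sum>u\<in>F. w v * d v u powr p * x v u)"

definition lp_optimal ::
  "real \<Rightarrow> ('a \<Rightarrow> 'a \<Rightarrow> real) \<Rightarrow> ('a \<Rightarrow> real) \<Rightarrow> ('a \<Rightarrow> real) \<Rightarrow> 'a set \<Rightarrow> 'a set \<Rightarrow> 'a set set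
     \<Rightarrow> ('a \<Rightarrow> 'a \<Rightarrow> real) \<Rightarrow> ('a \<Rightarrow> real) \<Rightarrow> bool" where
  "lp_optimal p d f w P F I x y \<longleftrightarrow> lp_feasible P F I x y \<and>
     (\<forall>x' y'. lp_feasible P F I x' y' \<longrightarrow> lp_obj p d f w P F x y \<le> lp_obj p d f w P F x' y')"

definition frac_radius ::
  "real \<Rightarrow> ('a \<Rightarrow> 'a \<Rightarrow> real) \<Rightarrow> 'a set \<Rightarrow> ('a \<Rightarrow> 'a \<Rightarrow> real) \<Rightarrow> 'a \<Rightarrow> real" where
  "frac_radius p d F x v = (\<Sum>u\<in>F. d v u powr p * x v u) powr (1 / p)"

fun consol_inner :: "('a \<Rightarrow> 'a \<Rightarrow> bool) \<Rightarrow> ('a \<Rightarrow> real) \<Rightarrow> 'a \<Rightarrow> 'a list \<Rightarrow> ('a \<Rightarrow> real)" where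
  "consol_inner C w' vi [] = w'"
| "consol_inner C w' vi (vj # js) =
     consol_inner C (if C vi vj \<and> w' vi > 0 then w'(vi := w' vi + w' vj, vj := 0) else w') vi js"

fun consol_outer :: "('a \<Rightarrow> 'a \<Rightarrow> bool) \<Rightarrow> ('a \<Rightarrow> real) \<Rightarrow> 'a list \<Rightarrow> ('a \<Rightarrow> real)" where
  "consol_outer C w' [] = w'"
| "consol_outer C w' (vi # rest) = consol_outer C (consol_inner C w' vi rest) rest"

definition consolidate ::
  "real \<Rightarrow> ('a \<Rightarrow> 'a \<Rightarrow> real) \<Rightarrow> 'a set \<Rightarrow> ('a \<Rightarrow> 'a \<Rightarrow> real) \<Rightarrow> ('a \<Rightarrow> real) \<Rightarrow> 'a list \<Rightarrow> ('a \<Rightarrow> real)" where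
  "consolidate p d F x w vs =
     consol_outer (\<lambda>vi vj. d vi vj \<le> 2 powr ((p + 1) / p) * frac_radius p d F x vj) w vs"

end

theory Submission
  imports Defs "HOL-Analysis.Convex"
begin

text \<open>Consolidation merges each client v into a client \<open>\<sigma> v\<close> at distance at most
\<open>2^((p+1)/p) R(v)\<close>, and \<open>w'\<close> is \<open>w\<close> pushed forward along \<open>\<sigma>\<close>. By the triangle
inequality \<open>d(v,F') \<le> d(v,\<sigma> v) + d(\<sigma> v,F')\<close>, and the convexity split
\<open>(a+b)^p \<le> 8^(p-1) a^p + (8/7)^(p-1) b^p\<close> turns this into
\<open>d(v,F')^p \<le> 4\<cdot>16^(p-1) R(v)^p + (8/7)^(p-1) d(\<sigma> v,F')^p\<close>. Summing with weights \<open>w\<close>,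
the first terms add up to at most the LP connection cost, hence to at most \<open>z\<^sup>*\<close>, and the
second terms regroup along the fibres of \<open>\<sigma>\<close> into the \<open>w'\<close>-connection cost of \<open>F'\<close>.\<close>

lemma one_le_powr_of_le_one:
  fixes t e :: real
  assumes "0 < t" "t \<le> 1" "e \<le> 0"
  shows "1 \<le> t powr e"
  using assms ge_one_powr_ge_zero[of "1 / t" "- e"] by (simp add: powr_minus_divide powr_divide)

lemma powr_add_le_convex_split:
  fixes a b t p :: real
  assumes a: "0 \<le> a" and b: "0 \<le> b" and t: "0 < t" "t < 1" and p: "1 \<le> p"
  shows "(a + b) powr p \<le> t powr (1 - p) * a powr p + (1 - t) powr (1 - p) * b powr p"
proof (cases "a = 0 \<or> b = 0")
  case True
  have "1 \<le> t powr (1 - p)" "1 \<le> (1 - t) powr (1 - p)"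
    using t p by (auto intro!: one_le_powr_of_le_one)
  then show ?thesis
    using True a b by (auto simp: add_increasing2 add_increasing mult_le_cancel_right1)
next
  case False
  with a b have a0: "0 < a" and b0: "0 < b" by auto
  have "(t * (a / t) + (1 - t) * (b / (1 - t))) powr p
        \<le> t * (a / t) powr p + (1 - t) * (b / (1 - t)) powr p"
    using convex_onD[OF powr_convex[OF p], of "1 - t" "a / t" "b / (1 - t)"] a0 b0 t by simp
  moreover have "s * (c / s) powr p = s powr (1 - p) * c powr p" if "0 < s" "0 \<le> c" for s c :: real
    using that by (simp add: powr_divide powr_diff)
  ultimately show ?thesis using t a b by simp
qed

lemma powr_add_le_8_split:
  fixes a b p :: real
  assumes "0 \<le> a" "0 \<le> b" "1 \<le> p"
  shows "(a + b) powr p \<le> 8 powr (p - 1) * a powr p + (8 / 7) powr (p - 1) * b powr p"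
proof -
  have inv: "(1 / x) powr (1 - p) = x powr (p - 1)" if "0 < x" for x :: real
    using that powr_minus_divide[of x "1 - p"] by (simp add: powr_divide)
  have "1 - 1 / 8 = 1 / (8 / 7 :: real)" by simp
  then show ?thesis
    using powr_add_le_convex_split[OF assms(1,2) _ _ assms(3), of "1 / 8"] inv[of 8] inv[of "8 / 7"]
    by simp
qed

lemma eight_powr_mult_two_powr: "8 powr (p - 1) * 2 powr (p + 1) = (4 * 16 powr (p - 1) :: real)"
proof -
  have "(8::real) powr (p - 1) = 2 powr (3 * (p - 1))" "(16::real) powr (p - 1) = 2 powr (4 * (p - 1))"
    using powr_powr[of 2 3 "p - 1"] powr_powr[of 2 4 "p - 1"] by simp_all
  moreover have "(2::real) powr (3 * (p - 1)) * 2 powr (p + 1) = 2 powr 2 * 2 powr (4 * (p - 1))"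
    unfolding powr_add[symmetric] by (simp add: algebra_simps)
  ultimately show ?thesis by simp
qed

lemma powr_add_le_consolidation_bound:
  fixes a b r p :: real
  assumes a: "0 \<le> a" "a \<le> 2 powr ((p + 1) / p) * r" and b: "0 \<le> b" and r: "0 \<le> r"
    and p: "1 \<le> p"
  shows "(a + b) powr p \<le> 4 * 16 powr (p - 1) * r powr p + (8 / 7) powr (p - 1) * b powr p"
proof -
  have "a powr p \<le> (2 powr ((p + 1) / p) * r) powr p"
    using a p by (intro powr_mono2) auto
  also have "\<dots> = 2 powr (p + 1) * r powr p"
    using p r by (simp add: powr_mult powr_powr)
  finally have "8 powr (p - 1) * a powr p \<le> 8 powr (p - 1) * (2 powr (p + 1) * r powr p)"
    by (rule mult_left_mono) simp
  also have "\<dots> = 4 * 16 powr (p - 1) * r powr p"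
    by (simp only: mult.assoc[symmetric] eight_powr_mult_two_powr)
  finally show ?thesis
    using powr_add_le_8_split[OF a(1) b p] by linarith
qed

lemma metric_onD:
  assumes "metric_on X d" "a \<in> X" "b \<in> X"
  shows "0 \<le> d a b" "d a a = 0" "d a b = d b a" "c \<in> X \<Longrightarrow> d a c \<le> d a b + d b c"
  using assms unfolding metric_on_def by auto

lemma dist_set_attained:
  assumes "finite S" "S \<noteq> {}"
  obtains u where "u \<in> S" "dist_set d v S = d v u"
proof -
  have "dist_set d v S \<in> (\<lambda>u. d v u) ` S"
    unfolding dist_set_def using assms by (intro Min_in) auto
  then show thesis using that by blast
qed

lemma dist_set_nonneg:
  assumes "metric_on X d" "v \<in> X" "S \<subseteq> X" "finite S" "S \<noteq> {}"
  shows "0 \<le> dist_set d v S"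
proof -
  obtain u where "u \<in> S" "dist_set d v S = d v u"
    using assms(4,5) by (rule dist_set_attained)
  then show ?thesis using metric_onD(1)[OF assms(1,2)] assms(3) by auto
qed

lemma dist_set_triangle:
  assumes d: "metric_on X d" and v: "v \<in> X" "v' \<in> X" and S: "S \<subseteq> X" "finite S" "S \<noteq> {}"
  shows "dist_set d v S \<le> d v v' + dist_set d v' S"
proof -
  obtain u where u: "u \<in> S" "dist_set d v' S = d v' u"
    using S(2,3) by (rule dist_set_attained)
  have "dist_set d v S \<le> d v u"
    unfolding dist_set_def using S u(1) by (intro Min_le) auto
  also have "\<dots> \<le> d v v' + d v' u"
    using metric_onD(4)[OF d v] u(1) S by auto
  finally show ?thesis using u(2) by simp
qed

lemma dist_set_powr_le_consolidated:
  assumes d: "metric_on X d" and v: "v \<in> X" "u \<in> X" and S: "S \<subseteq> X" "finite S" "S \<noteq> {}"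
    and p: "1 \<le> p" and r: "0 \<le> r" and close: "d u v \<le> 2 powr ((p + 1) / p) * r"
  shows "dist_set d v S powr p
           \<le> 4 * 16 powr (p - 1) * r powr p + (8 / 7) powr (p - 1) * dist_set d u S powr p"
proof -
  have "dist_set d v S powr p \<le> (d v u + dist_set d u S) powr p"
    using dist_set_triangle[OF d v S] dist_set_nonneg[OF d v(1) S] p by (intro powr_mono2) auto
  also have "\<dots> \<le> 4 * 16 powr (p - 1) * r powr p + (8 / 7) powr (p - 1) * dist_set d u S powr p"
    using close metric_onD[OF d v] dist_set_nonneg[OF d v(2) S] r p
    by (intro powr_add_le_consolidation_bound) auto
  finally show ?thesis .
qed

lemma sum_weighted_comp_fibres:
  fixes w w' g :: "'a \<Rightarrow> real"
  assumes "finite P" "\<forall>v\<in>P. \<sigma> v \<in> P" "\<forall>u\<in>P. w' u = (\<Sum>v\<in>{v\<in>P. \<sigma> v = u}. w v)"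
  shows "(\<Sum>v\<in>P. w v * g (\<sigma> v)) = (\<Sum>u\<in>P. w' u * g u)"
proof -
  have "(\<Sum>v\<in>P. w v * g (\<sigma> v)) = (\<Sum>u\<in>P. \<Sum>v\<in>{v\<in>P. \<sigma> v = u}. w v * g (\<sigma> v))"
    using assms(1,2) by (intro sum.group[symmetric]) auto
  also have "\<dots> = (\<Sum>u\<in>P. w' u * g u)"
    using assms(3) by (intro sum.cong refl) (simp add: sum_distrib_right)
  finally show ?thesis .
qed

lemma weighted_dist_set_powr_le_consolidated:
  assumes d: "metric_on X d" and P: "finite P" "P \<subseteq> X" and S: "S \<subseteq> X" "finite S" "S \<noteq> {}"
    and p: "1 \<le> p" and w: "\<forall>v\<in>P. 0 \<le> w v" and r: "\<forall>v\<in>P. 0 \<le> r v"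
    and \<sigma>: "\<forall>v\<in>P. \<sigma> v \<in> P \<and> (\<sigma> v = v \<or> d (\<sigma> v) v \<le> 2 powr ((p + 1) / p) * r v)"
    and w': "\<forall>u\<in>P. w' u = (\<Sum>v\<in>{v\<in>P. \<sigma> v = u}. w v)"
  shows "(\<Sum>v\<in>P. w v * dist_set d v S powr p)
           \<le> 4 * 16 powr (p - 1) * (\<Sum>v\<in>P. w v * r v powr p)
             + (8 / 7) powr (p - 1) * (\<Sum>u\<in>P. w' u * dist_set d u S powr p)"
proof -
  define K :: real where "K = 4 * 16 powr (p - 1)"
  define c :: real where "c = (8 / 7) powr (p - 1)"
  have "dist_set d v S powr p \<le> K * r v powr p + c * dist_set d (\<sigma> v) S powr p" if v: "v \<in> P" for v
  proof -
    have "0 \<le> 2 powr ((p + 1) / p) * r v" "d v v = 0"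
      using r v metric_onD(2)[OF d, of v v] P(2) by auto
    moreover have "\<sigma> v = v \<or> d (\<sigma> v) v \<le> 2 powr ((p + 1) / p) * r v"
      using \<sigma> v by blast
    ultimately have "d (\<sigma> v) v \<le> 2 powr ((p + 1) / p) * r v"
      by auto
    then show ?thesis
      using dist_set_powr_le_consolidated[OF d _ _ S p] \<sigma> v r P(2) unfolding K_def c_def by blast
  qed
  then have "(\<Sum>v\<in>P. w v * dist_set d v S powr p)
      \<le> (\<Sum>v\<in>P. w v * (K * r v powr p + c * dist_set d (\<sigma> v) S powr p))"
    using w by (intro sum_mono mult_left_mono) auto
  also have "\<dots> = K * (\<Sum>v\<in>P. w v * r v powr p) + c * (\<Sum>v\<in>P. w v * dist_set d (\<sigma> v) S powr p)"
    by (simp add: sum.distrib sum_distrib_left algebra_simps)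
  also have "\<dots> = K * (\<Sum>v\<in>P. w v * r v powr p) + c * (\<Sum>u\<in>P. w' u * dist_set d u S powr p)"
    using sum_weighted_comp_fibres[OF P(1) _ w', of "\<lambda>u. dist_set d u S powr p"] \<sigma> by simp
  finally show ?thesis unfolding K_def c_def .
qed

text \<open>Loop invariant of the consolidation: \<open>\<sigma> v\<close> is the client currently holding the weight
of \<open>v\<close>, and a client in \<open>U\<close> (not yet processed as an absorbing client) holds no weight
but its own.\<close>
definition consolidation_map ::
  "('a \<Rightarrow> 'a \<Rightarrow> bool) \<Rightarrow> ('a \<Rightarrow> real) \<Rightarrow> ('a \<Rightarrow> real) \<Rightarrow> ('a \<Rightarrow> 'a) \<Rightarrow> 'a set \<Rightarrow> 'a set \<Rightarrow> bool" where
  "consolidation_map C w w' \<sigma> P U \<longleftrightarrow>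
     (\<forall>v\<in>P. \<sigma> v \<in> P \<and> (\<sigma> v = v \<or> C (\<sigma> v) v)) \<and>
     (\<forall>u\<in>P. w' u = (\<Sum>v\<in>{v\<in>P. \<sigma> v = u}. w v)) \<and>
     (\<forall>u\<in>U. \<forall>v\<in>P. \<sigma> v = u \<longrightarrow> v = u)"

lemma consolidation_map_merge:
  assumes fin: "finite P" and inv: "consolidation_map C w w' \<sigma> P U"
    and vi: "vi \<in> P" "vi \<notin> U" and vj: "vj \<in> U" "U \<subseteq> P" and C: "C vi vj"
  shows "consolidation_map C w (w'(vi := w' vi + w' vj, vj := 0))
           (\<lambda>v. if \<sigma> v = vj then vi else \<sigma> v) P U"
proof -
  let ?\<sigma> = "\<lambda>v. if \<sigma> v = vj then vi else \<sigma> v"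
  have ne: "vi \<noteq> vj" and vjP: "vj \<in> P" using vi vj by auto
  have vj_fixed: "\<forall>v\<in>P. \<sigma> v = vj \<longrightarrow> v = vj"
    using inv vj unfolding consolidation_map_def by auto
  have fibre: "{v\<in>P. ?\<sigma> v = u} =
      (if u = vj then {} else if u = vi then {v\<in>P. \<sigma> v = vi} \<union> {v\<in>P. \<sigma> v = vj}
       else {v\<in>P. \<sigma> v = u})" for u
    using ne by auto
  have "(w'(vi := w' vi + w' vj, vj := 0)) u = (\<Sum>v\<in>{v\<in>P. ?\<sigma> v = u}. w v)" if "u \<in> P" for u
    using inv that vi(1) vjP fin ne unfolding fibre consolidation_map_def
    by (simp add: sum.union_disjoint disjoint_iff)
  then show ?thesis
    using inv vi vj_fixed C unfolding consolidation_map_def by auto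
qed

lemma consolidation_map_consol_inner:
  assumes "finite P" "vi \<in> P" "vi \<notin> U" "U \<subseteq> P" "set js \<subseteq> U"
    and "consolidation_map C w w' \<sigma> P U"
  shows "\<exists>\<sigma>'. consolidation_map C w (consol_inner C w' vi js) \<sigma>' P U"
  using assms(5,6)
proof (induction js arbitrary: w' \<sigma>)
  case Nil
  then show ?case by auto
next
  case (Cons vj js)
  show ?case
  proof (cases "C vi vj \<and> w' vi > 0")
    case True
    then have "consolidation_map C w (w'(vi := w' vi + w' vj, vj := 0))
        (\<lambda>v. if \<sigma> v = vj then vi else \<sigma> v) P U"
      using Cons.prems consolidation_map_merge[OF assms(1) Cons.prems(2) assms(2,3) _ assms(4)] by simp
    then show ?thesis using True Cons.IH Cons.prems(1) by auto
  next
    case False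
    then show ?thesis using Cons by auto
  qed
qed

lemma consolidation_map_consol_outer:
  assumes "finite P" "distinct vs" "set vs \<subseteq> P" "consolidation_map C w w' \<sigma> P (set vs)"
  shows "\<exists>\<sigma>'. consolidation_map C w (consol_outer C w' vs) \<sigma>' P {}"
  using assms(2-4)
proof (induction vs arbitrary: w' \<sigma>)
  case Nil
  then show ?case by auto
next
  case (Cons vi rest)
  have "consolidation_map C w w' \<sigma> P (set rest)"
    using Cons.prems(3) unfolding consolidation_map_def by auto
  moreover have "vi \<in> P" "vi \<notin> set rest" "set rest \<subseteq> P"
    using Cons.prems(1,2) by auto
  ultimately obtain \<sigma>' where "consolidation_map C w (consol_inner C w' vi rest) \<sigma>' P (set rest)"
    using consolidation_map_consol_inner[OF assms(1)] by blast
  then show ?case using Cons.IH Cons.prems(1,2) by simp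
qed

lemma consol_outer_fibre_sums:
  assumes "finite P" "distinct vs" "set vs = P"
  obtains \<sigma> where "\<forall>v\<in>P. \<sigma> v \<in> P \<and> (\<sigma> v = v \<or> C (\<sigma> v) v)"
    and "\<forall>u\<in>P. consol_outer C w vs u = (\<Sum>v\<in>{v\<in>P. \<sigma> v = u}. w v)"
proof -
  have "{v\<in>P. v = u} = {u}" if "u \<in> P" for u
    using that by auto
  then have "consolidation_map C w w (\<lambda>v. v) P (set vs)"
    using assms(3) unfolding consolidation_map_def by auto
  then obtain \<sigma> where "consolidation_map C w (consol_outer C w vs) \<sigma> P {}"
    using consolidation_map_consol_outer[OF assms(1,2)] assms(3) by blast
  then show thesis
    using that unfolding consolidation_map_def by blast
qed

text \<open>The LP has no constraint \<open>y \<ge> 0\<close>: it follows from \<open>x \<le> y\<close> when there is a client,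
and otherwise optimality forces \<open>f = 0\<close> on \<open>F\<close>, since \<open>y\<close> can be lowered freely.\<close>
lemma lp_optimal_facility_cost_nonneg:
  assumes opt: "lp_optimal p d f w P F I x y" and F: "finite F" and f: "\<forall>u\<in>F. 0 \<le> f u"
  shows "0 \<le> (\<Sum>u\<in>F. f u * y u)"
proof (cases "P = {}")
  case False
  then obtain v where "v \<in> P" by blast
  then have "\<forall>u\<in>F. 0 \<le> y u"
    using opt unfolding lp_optimal_def lp_feasible_def by (meson order_trans)
  then show ?thesis using f by (auto intro!: sum_nonneg)
next
  case True
  have "f u0 \<le> 0" if u0: "u0 \<in> F" for u0
  proof -
    define y' where "y' = y(u0 := y u0 - 1)"
    have "(\<Sum>u\<in>S. y' u) \<le> (\<Sum>u\<in>S. y u)" for S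
      unfolding y'_def by (intro sum_mono) auto
    then have "lp_feasible P F I x y'"
      using opt True unfolding lp_optimal_def lp_feasible_def by (simp, meson order_trans)
    then have "lp_obj p d f w P F x y \<le> lp_obj p d f w P F x y'"
      using opt unfolding lp_optimal_def by blast
    moreover have "(\<Sum>u\<in>F. f u * y' u) = (\<Sum>u\<in>F. f u * y u) - f u0"
      unfolding y'_def using F u0 by (simp add: sum.remove algebra_simps)
    ultimately show ?thesis using True unfolding lp_obj_def by simp
  qed
  then have "\<forall>u\<in>F. f u = 0"
    using f by (meson order_antisym)
  then show ?thesis by simp
qed

lemma frac_radius_powr:
  assumes "0 < p" "\<forall>u\<in>F. 0 \<le> x v u"
  shows "frac_radius p d F x v powr p = (\<Sum>u\<in>F. d v u powr p * x v u)"
  using assms by (simp add: frac_radius_def powr_powr sum_nonneg)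

lemma lp_optimal_connection_cost_le_obj:
  assumes opt: "lp_optimal p d f w P F I x y" and F: "finite F" and f: "\<forall>u\<in>F. 0 \<le> f u"
    and p: "0 < p"
  shows "(\<Sum>v\<in>P. w v * frac_radius p d F x v powr p) \<le> lp_obj p d f w P F x y"
proof -
  have "\<forall>v\<in>P. \<forall>u\<in>F. 0 \<le> x v u"
    using opt unfolding lp_optimal_def lp_feasible_def by blast
  then have "(\<Sum>v\<in>P. w v * frac_radius p d F x v powr p)
      = (\<Sum>v\<in>P. \<Sum>u\<in>F. w v * d v u powr p * x v u)"
    using p by (simp add: frac_radius_powr sum_distrib_left mult.assoc)
  then show ?thesis
    using lp_optimal_facility_cost_nonneg[OF opt F f] unfolding lp_obj_def by simp
qed

theorem mainTheorem10:
  fixes p :: real and d :: "'a \<Rightarrow> 'a \<Rightarrow> real" and P F :: "'a set" and I :: "'a set set"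
    and f w :: "'a \<Rightarrow> real" and x :: "'a \<Rightarrow> 'a \<Rightarrow> real" and y :: "'a \<Rightarrow> real"
    and vs :: "'a list" and F' :: "'a set" and z' :: real
  assumes hp: "p \<ge> 1"
    and hP: "finite P" and hF: "finite F"
    and hd: "metric_on (P \<union> F) d"
    and hf: "\<forall>u\<in>F. f u \<ge> 0"
    and hw: "\<forall>v\<in>P. w v \<ge> 0"
    and hM: "matroid F I"
    and hopt: "lp_optimal p d f w P F I x y"
    and hsum1: "\<forall>v\<in>P. (\<Sum>u\<in>F. x v u) = 1"
    and hvs: "distinct vs" "set vs = P" "sorted (map (frac_radius p d F x) vs)"
    and hF': "F' \<in> I" "F' \<noteq> {}"
    and hz': "(\<Sum>u\<in>F'. f u) + (\<Sum>v\<in>P. consolidate p d F x w vs v * dist_set d v F' powr p) \<le> z'"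
  shows "(\<Sum>u\<in>F'. f u) + (\<Sum>v\<in>P. w v * dist_set d v F' powr p)
           \<le> 4 * 16 powr (p - 1) * lp_obj p d f w P F x y + (8 / 7) powr (p - 1) * z'"
proof -
  define R where "R = frac_radius p d F x"
  define C where "C vi vj \<longleftrightarrow> d vi vj \<le> 2 powr ((p + 1) / p) * R vj" for vi vj
  define w' where "w' = consolidate p d F x w vs"
  have "w' = consol_outer C w vs"
    unfolding w'_def consolidate_def C_def R_def ..
  then obtain \<sigma> where \<sigma>: "\<forall>v\<in>P. \<sigma> v \<in> P \<and> (\<sigma> v = v \<or> C (\<sigma> v) v)"
    and w': "\<forall>u\<in>P. w' u = (\<Sum>v\<in>{v\<in>P. \<sigma> v = u}. w v)"
    using consol_outer_fibre_sums[OF hP hvs(1,2), of C w] by blast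
  have F'F: "F' \<subseteq> F" "finite F'"
    using hM hF'(1) hF unfolding matroid_def by (auto intro: finite_subset)
  have "(\<Sum>v\<in>P. w v * dist_set d v F' powr p)
      \<le> 4 * 16 powr (p - 1) * (\<Sum>v\<in>P. w v * R v powr p)
        + (8 / 7) powr (p - 1) * (\<Sum>u\<in>P. w' u * dist_set d u F' powr p)"
    using \<sigma> F'F hF'(2) unfolding C_def R_def frac_radius_def
    by (intro weighted_dist_set_powr_le_consolidated[OF hd hP _ _ _ _ hp hw _ _ w']) auto
  moreover have "4 * 16 powr (p - 1) * (\<Sum>v\<in>P. w v * R v powr p)
      \<le> 4 * 16 powr (p - 1) * lp_obj p d f w P F x y"
    using lp_optimal_connection_cost_le_obj[OF hopt hF hf] hp unfolding R_def
    by (intro mult_left_mono) simp_all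
  moreover have "(8 / 7) powr (p - 1) * ((\<Sum>u\<in>F'. f u) + (\<Sum>u\<in>P. w' u * dist_set d u F' powr p))
      \<le> (8 / 7) powr (p - 1) * z'"
    using hz' unfolding w'_def by (simp add: mult_left_mono)
  moreover have "(\<Sum>u\<in>F'. f u) \<le> (8 / 7) powr (p - 1) * (\<Sum>u\<in>F'. f u)"
    using mult_right_mono[OF ge_one_powr_ge_zero sum_nonneg, of "8 / 7" "p - 1" F' f] F'F(1) hf hp
    by auto
  ultimately show ?thesis by (simp only: distrib_left)
qed

end
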